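(* Let $E$ be a free $A_n(K)$-module with basis $e_1,\dots,e_m$, let $f\in E$, and let $G=\{g_1,\dots,g_r\}\subseteq E$ be an $(x,\partial)$-Gröbner basis in $E$ (i.e. an $(x,\partial)$-Gröbner basis of the submodule $\sum_{i=1}^r A_n(K)g_i$). Then there exist an element $g\in E$ and elements $Q_1,\dots,Q_r\in A_n(K)$ such that $f-g=\sum_{i=1}^r Q_ig_i$ and $g$ is $(x,\partial)$-reduced with respect to $G$.
   Context: $K$ is a field of characteristic zero and $A_n(K)$ is the Weyl algebra: the $K$-algebra generated by $x_1,\dots,x_n,\partial_1,\dots,\partial_n$ in which all pairs of generators commute except that $\partial_ix_i=x_i\partial_i+1$ ($i=1,\dots,n$). $\Theta$ denotes the set of monomials $x^\alpha\partial^\beta=x_1^{\alpha_1}\cdots x_n^{\alpha_n}\partial_1^{\beta_1}\cdots\partial_n^{\beta_n}$ ($\alpha,\beta\in\mathbf N^n$); it is a $K$-basis of $A_n(K)$. For $\theta=x^\alpha\partial^\beta$ put $ord_x\theta=|\alpha|=\sum\alpha_i$ and $ord_\partial\theta=|\beta|$. For $\theta=x^\alpha\partial^\beta$, $\theta'=x^\gamma\partial^\delta$ we say $\theta$ divides $\theta'$ ($\theta\mid\theta'$) if $\alpha_i\le\gamma_i,\beta_i\le\delta_i$ for all $i$, and then $\theta'/\theta:=x^{\gamma-\alpha}\partial^{\delta-\beta}\in\Theta$. The set $\Theta e=\{\theta e_i\}$ of terms is a $K$-basis of $E$; every nonzero $f\in E$ is uniquely a $K$-linear combination of distinct terms with nonzero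 coefficients, and these terms are said to appear in $f$. For a term $\theta e_i$, $ord_x(\theta e_i)=ord_x\theta$, $ord_\partial(\theta e_i)=ord_\partial\theta$. For $\theta=x^\alpha\partial^\beta\in\Theta$ and a term $w=x^\gamma\partial^\delta e_i$, the notation $\theta w$ denotes the term $x^{\alpha+\gamma}\partial^{\beta+\delta}e_i$ (exponent addition), whereas $\theta f$ for $f\in E$ denotes the module action. A term $w=\theta'e_i$ is a multiple of (is divisible by) $v=\theta e_j$, written $v\mid w$, if $i=j$ and $\theta\mid\theta'$; then $w/v:=\theta'/\theta$. Orders on $\Theta$: $x^\alpha\partial^\beta<_x x^\gamma\partial^\delta$ iff $(|\alpha|,|\beta|,\alpha_1,\dots,\alpha_n,\beta_1,\dots,\beta_n)$ is lexicographically smaller than $(|\gamma|,|\delta|,\gamma_1,\dots,\gamma_n,\delta_1,\dots,\delta_n)$; $x^\alpha\partial^\beta<_\partial x^\gamma\partial^\delta$ iff $(|\beta|,|\alpha|,\beta_1,\dots,\beta_n,\alpha_1,\dots,\alpha_n)$ is lexicographically smaller than $(|\delta|,|\gamma|,\delta_1,\dots,\delta_n,\gamma_1,\dots,\gamma_n)$. On terms, $\theta e_i<_x\theta'e_j$ iff $\theta<_x\theta'$, or $\theta=\theta'$ and $i<j$; similarly for $<_\partial$. For nonzero $f\in E$, the $x$-leader $u_f$ is the $<_x$-greatest term appearing in $f$ and the $\partial$-leader $v_f$ is the $<_\partial$-greatest term appearing in $f$; $lc_x(f)$ is the coefficient of $u_f$ in $f$. For $g\ne0$, an element $f\in E$ is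 $(x,\partial)$-reduced with respect to $g$ if $f$ contains no term of the form $\theta u_g$ ($\theta\in\Theta$) with $ord_\partial(\theta v_g)\le ord_\partial v_f$ (the zero element is reduced); $f$ is $(x,\partial)$-reduced with respect to a set $G$ if it is so with respect to every element of $G$. For nonzero $f$, let $d(f)=ord_\partial v_f-ord_\partial u_f$. A finite set $G=\{g_1,\dots,g_r\}$ of nonzero elements of a submodule $N\subseteq E$ is an $(x,\partial)$-Gröbner basis of $N$ if for every nonzero $f\in N$ there is $i$ with $u_{g_i}\mid u_f$ and $d(g_i)\le d(f)$. *)

theory Defs
  imports Main
begin

(* Monomials x^alpha d^beta are pairs (alpha, beta) of exponent vectors nat => nat;
   variable i (0-based) corresponds to x_{i+1}, d_{i+1}.
   Terms theta e_i are pairs (theta, i) with i < m (0-based: e_{i+1}). *)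
type_synonym mono = "(nat \<Rightarrow> nat) \<times> (nat \<Rightarrow> nat)"
type_synonym trm = "mono \<times> nat"
type_synonym 'k weyl = "mono \<Rightarrow> 'k"
type_synonym 'k fmod = "trm \<Rightarrow> 'k"

definition supp :: "('a \<Rightarrow> 'k::zero) \<Rightarrow> 'a set" where
  "supp f = {w. f w \<noteq> 0}"

definition in_mono :: "nat \<Rightarrow> mono \<Rightarrow> bool" where
  "in_mono n \<theta> = (\<forall>i\<ge>n. fst \<theta> i = 0 \<and> snd \<theta> i = 0)"

definition in_weyl :: "nat \<Rightarrow> 'k::zero weyl \<Rightarrow> bool" where
  "in_weyl n P = (finite (supp P) \<and> (\<forall>\<theta>\<in>supp P. in_mono n \<theta>))"

definition in_E :: "nat \<Rightarrow> nat \<Rightarrow> 'k::zero fmod \<Rightarrow> bool" where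
  "in_E n m f = (finite (supp f) \<and> (\<forall>w\<in>supp f. in_mono n (fst w) \<and> snd w < m))"

(* |alpha| for a finitely supported exponent vector *)
definition deg :: "(nat \<Rightarrow> nat) \<Rightarrow> nat" where
  "deg a = sum a {i. a i \<noteq> 0}"

definition lexless :: "(nat \<Rightarrow> nat) \<Rightarrow> (nat \<Rightarrow> nat) \<Rightarrow> bool" where
  "lexless a b = (\<exists>j. (\<forall>i<j. a i = b i) \<and> a j < b j)"

definition mono_less_x :: "mono \<Rightarrow> mono \<Rightarrow> bool" where
  "mono_less_x t s =
     (deg (fst t) < deg (fst s) \<or>
      (deg (fst t) = deg (fst s) \<and>
       (deg (snd t) < deg (snd s) \<or>
        (deg (snd t) = deg (snd s) \<and>
         (lexless (fst t) (fst s) \<or> (fst t = fst s \<and> lexless (snd t) (snd s)))))))"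

definition mono_less_d :: "mono \<Rightarrow> mono \<Rightarrow> bool" where
  "mono_less_d t s =
     (deg (snd t) < deg (snd s) \<or>
      (deg (snd t) = deg (snd s) \<and>
       (deg (fst t) < deg (fst s) \<or>
        (deg (fst t) = deg (fst s) \<and>
         (lexless (snd t) (snd s) \<or> (snd t = snd s \<and> lexless (fst t) (fst s)))))))"

definition trm_less_x :: "trm \<Rightarrow> trm \<Rightarrow> bool" where
  "trm_less_x v w = (mono_less_x (fst v) (fst w) \<or> (fst v = fst w \<and> snd v < snd w))"

definition trm_less_d :: "trm \<Rightarrow> trm \<Rightarrow> bool" where
  "trm_less_d v w = (mono_less_d (fst v) (fst w) \<or> (fst v = fst w \<and> snd v < snd w))"

definition ux :: "'k::zero fmod \<Rightarrow> trm" where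
  "ux f = (THE w. w \<in> supp f \<and> (\<forall>v\<in>supp f. v \<noteq> w \<longrightarrow> trm_less_x v w))"

definition vd :: "'k::zero fmod \<Rightarrow> trm" where
  "vd f = (THE w. w \<in> supp f \<and> (\<forall>v\<in>supp f. v \<noteq> w \<longrightarrow> trm_less_d v w))"

definition ord_d :: "trm \<Rightarrow> nat" where
  "ord_d w = deg (snd (fst w))"

definition dd :: "'k::zero fmod \<Rightarrow> int" where
  "dd f = int (ord_d (vd f)) - int (ord_d (ux f))"

definition trm_dvd :: "trm \<Rightarrow> trm \<Rightarrow> bool" where
  "trm_dvd v w = (snd v = snd w \<and> (\<forall>i. fst (fst v) i \<le> fst (fst w) i \<and> snd (fst v) i \<le> snd (fst w) i))"

definition tmul :: "mono \<Rightarrow> trm \<Rightarrow> trm" where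
  "tmul \<theta> w = (((\<lambda>i. fst \<theta> i + fst (fst w) i), (\<lambda>i. snd \<theta> i + snd (fst w) i)), snd w)"

(* module action of the monomial x^a d^b on the term x^c d^d e_i, via the normal-ordering
   (Leibniz) rule  d^b x^c = sum_k prod_j C(b_j,k_j) C(c_j,k_j) k_j! x^(c-k) d^(b-k) *)
definition mono_act :: "mono \<Rightarrow> trm \<Rightarrow> 'k::field_char_0 fmod" where
  "mono_act \<theta> w = (\<lambda>v. if snd v = snd w then
      (\<Sum>k\<in>{k. \<forall>j. k j \<le> snd \<theta> j \<and> k j \<le> fst (fst w) j \<and>
               fst (fst v) j + k j = fst \<theta> j + fst (fst w) j \<and>
               snd (fst v) j + k j = snd \<theta> j + snd (fst w) j}.
         of_nat (\<Prod>j\<in>{j. k j \<noteq> 0}. (snd \<theta> j choose k j) * (fst (fst w) j choose k j) * fact (k j)))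
    else 0)"

definition act :: "'k::field_char_0 weyl \<Rightarrow> 'k fmod \<Rightarrow> 'k fmod" where
  "act P f = (\<lambda>v. \<Sum>\<theta>\<in>supp P. \<Sum>w\<in>supp f. P \<theta> * f w * mono_act \<theta> w v)"

definition submod :: "nat \<Rightarrow> nat \<Rightarrow> (nat \<Rightarrow> 'k::field_char_0 fmod) \<Rightarrow> 'k fmod set" where
  "submod n r g = {(\<lambda>v. \<Sum>i<r. act (Q i) (g i) v) | Q. \<forall>i<r. in_weyl n (Q i)}"

definition is_GB :: "nat \<Rightarrow> (nat \<Rightarrow> 'k::field_char_0 fmod) \<Rightarrow> 'k fmod set \<Rightarrow> bool" where
  "is_GB r g N = ((\<forall>i<r. g i \<noteq> (\<lambda>_. 0) \<and> g i \<in> N) \<and>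
     (\<forall>f\<in>N. f \<noteq> (\<lambda>_. 0) \<longrightarrow> (\<exists>i<r. trm_dvd (ux (g i)) (ux f) \<and> dd (g i) \<le> dd f)))"

definition reduced_wrt :: "'k::zero fmod \<Rightarrow> 'k fmod \<Rightarrow> bool" where
  "reduced_wrt g f = (f = (\<lambda>_. 0) \<or>
     (\<forall>\<theta>. f (tmul \<theta> (ux g)) \<noteq> 0 \<longrightarrow> \<not> ord_d (tmul \<theta> (vd g)) \<le> ord_d (vd f)))"

end

theory Submission
  imports Defs
begin

(* Division with remainder by g_1, ..., g_r.  While h has a term w = theta u_{g_i} that violates
   (x,d)-reducedness, take the <_x-greatest such w and subtract (h_w / lc_x g_i) theta g_i.  Normal
   ordering in the Weyl algebra only lowers exponents, so this removes w, creates only terms <_x-below w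
   and does not raise the d-order of the d-leader; hence the greatest offending term strictly decreases.
   All terms stay in a finite box of bounded x- and d-orders, so the process terminates. *)

section \<open>Term orders and leaders\<close>

lemma irreflp_lexless: "irreflp lexless"
  by (rule irreflpI) (auto simp: lexless_def)

lemma transp_lexless: "transp lexless"
proof (rule transpI)
  fix a b c
  assume "lexless a b" "lexless b c"
  then obtain j k where "\<forall>i<j. a i = b i" "a j < b j" "\<forall>i<k. b i = c i" "b k < c k"
    unfolding lexless_def by blast
  then show "lexless a c"
    unfolding lexless_def
    by (intro exI[of _ "min j k"]) (cases j k rule: linorder_cases; auto simp: min_def)
qed

lemma totalp_lexless: "totalp lexless"
proof (rule totalpI)
  fix a b :: "nat \<Rightarrow> nat"
  assume "a \<noteq> b"
  define j where "j = (LEAST j. a j \<noteq> b j)"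
  have "a j \<noteq> b j"
    unfolding j_def by (rule LeastI_ex) (use \<open>a \<noteq> b\<close> in auto)
  moreover have "\<forall>i<j. a i = b i"
    unfolding j_def using not_less_Least by blast
  ultimately show "lexless a b \<or> lexless b a"
    unfolding lexless_def by (metis linorder_neqE_nat)
qed

lemmas lexless_irrefl = irreflpD[OF irreflp_lexless]
  and lexless_trans = transpD[OF transp_lexless]
  and lexless_total = totalpD[OF totalp_lexless]

lemma irreflp_mono_less_x: "irreflp mono_less_x"
  by (rule irreflpI) (auto simp: mono_less_x_def lexless_irrefl)

lemma transp_mono_less_x: "transp mono_less_x"
  by (rule transpI) (auto simp: mono_less_x_def dest: lexless_trans)

lemma totalp_mono_less_x: "totalp mono_less_x"
proof (rule totalpI)
  fix a b :: mono
  assume "a \<noteq> b"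
  then show "mono_less_x a b \<or> mono_less_x b a"
    unfolding mono_less_x_def
    using lexless_total[of "fst a" "fst b"] lexless_total[of "snd a" "snd b"]
    by (cases a, cases b) auto
qed

lemma irreflp_mono_less_d: "irreflp mono_less_d"
  by (rule irreflpI) (auto simp: mono_less_d_def lexless_irrefl)

lemma transp_mono_less_d: "transp mono_less_d"
  by (rule transpI) (auto simp: mono_less_d_def dest: lexless_trans)

lemma totalp_mono_less_d: "totalp mono_less_d"
proof (rule totalpI)
  fix a b :: mono
  assume "a \<noteq> b"
  then show "mono_less_d a b \<or> mono_less_d b a"
    unfolding mono_less_d_def
    using lexless_total[of "fst a" "fst b"] lexless_total[of "snd a" "snd b"]
    by (cases a, cases b) auto
qed

lemma irreflp_trm_less_x: "irreflp trm_less_x"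
  using irreflp_mono_less_x by (auto simp: irreflp_def trm_less_x_def)

lemma transp_trm_less_x: "transp trm_less_x"
  by (rule transpI) (use transp_mono_less_x in \<open>auto simp: trm_less_x_def dest: transpD\<close>)

lemma totalp_trm_less_x: "totalp trm_less_x"
  using totalp_mono_less_x
  by (intro totalpI) (auto simp: trm_less_x_def prod_eq_iff dest: totalpD)

lemma irreflp_trm_less_d: "irreflp trm_less_d"
  using irreflp_mono_less_d by (auto simp: irreflp_def trm_less_d_def)

lemma transp_trm_less_d: "transp trm_less_d"
  by (rule transpI) (use transp_mono_less_d in \<open>auto simp: trm_less_d_def dest: transpD\<close>)

lemma totalp_trm_less_d: "totalp trm_less_d"
  using totalp_mono_less_d
  by (intro totalpI) (auto simp: trm_less_d_def prod_eq_iff dest: totalpD)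

lemma finite_has_greatest_wrt:
  assumes "transp R" "totalp R" "finite A" "A \<noteq> {}"
  shows "\<exists>w\<in>A. \<forall>v\<in>A. v \<noteq> w \<longrightarrow> R v w"
  using \<open>finite A\<close> \<open>A \<noteq> {}\<close>
proof (induction A rule: finite_ne_induct)
  case (singleton x)
  then show ?case by auto
next
  case (insert x F)
  then obtain w where "w \<in> F" and w: "\<forall>v\<in>F. v \<noteq> w \<longrightarrow> R v w"
    by blast
  show ?case
  proof (cases "R x w")
    case True
    with \<open>w \<in> F\<close> w show ?thesis by blast
  next
    case False
    with totalpD[OF \<open>totalp R\<close>, of x w] \<open>w \<in> F\<close> \<open>x \<notin> F\<close> have "R w x"
      by blast
    then have "R v x" if "v \<in> F" for v
      using w that transpD[OF \<open>transp R\<close>, of v w x] by (cases "v = w") auto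
    then show ?thesis by blast
  qed
qed

lemma The_greatest_wrt:
  assumes "irreflp R" "transp R" "totalp R" "finite A" "A \<noteq> {}"
  defines "w \<equiv> THE w. w \<in> A \<and> (\<forall>v\<in>A. v \<noteq> w \<longrightarrow> R v w)"
  shows "w \<in> A" and "\<And>v. v \<in> A \<Longrightarrow> v \<noteq> w \<Longrightarrow> R v w"
proof -
  obtain w0 where w0: "w0 \<in> A" "\<forall>v\<in>A. v \<noteq> w0 \<longrightarrow> R v w0"
    using finite_has_greatest_wrt[OF assms(2-5)] by blast
  have "w' = w0" if "w' \<in> A" "\<forall>v\<in>A. v \<noteq> w' \<longrightarrow> R v w'" for w'
    using w0 that irreflpD[OF \<open>irreflp R\<close>] transpD[OF \<open>transp R\<close>] by metis
  with w0 have "\<exists>!w. w \<in> A \<and> (\<forall>v\<in>A. v \<noteq> w \<longrightarrow> R v w)"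
    by blast
  then have "w \<in> A \<and> (\<forall>v\<in>A. v \<noteq> w \<longrightarrow> R v w)"
    unfolding w_def by (rule theI')
  then show "w \<in> A" "\<And>v. v \<in> A \<Longrightarrow> v \<noteq> w \<Longrightarrow> R v w"
    by blast+
qed

lemma ux_greatest:
  assumes "finite (supp f)" "supp f \<noteq> {}"
  shows "ux f \<in> supp f" and "\<And>v. v \<in> supp f \<Longrightarrow> v \<noteq> ux f \<Longrightarrow> trm_less_x v (ux f)"
  unfolding ux_def
  by (rule The_greatest_wrt[OF irreflp_trm_less_x transp_trm_less_x totalp_trm_less_x assms])+

lemma vd_greatest:
  assumes "finite (supp f)" "supp f \<noteq> {}"
  shows "vd f \<in> supp f" and "\<And>v. v \<in> supp f \<Longrightarrow> v \<noteq> vd f \<Longrightarrow> trm_less_d v (vd f)"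
  unfolding vd_def
  by (rule The_greatest_wrt[OF irreflp_trm_less_d transp_trm_less_d totalp_trm_less_d assms])+

lemma ord_d_le_ord_d_vd:
  assumes "finite (supp f)" "v \<in> supp f"
  shows "ord_d v \<le> ord_d (vd f)"
  using vd_greatest[of f] assms
  unfolding trm_less_d_def mono_less_d_def ord_d_def by fastforce

definition ord_x :: "trm \<Rightarrow> nat" where
  "ord_x w = deg (fst (fst w))"

lemma deg_eq_sum_lessThan:
  assumes "\<And>i. n \<le> i \<Longrightarrow> a i = 0"
  shows "deg a = sum a {..<n}"
proof -
  have "{i. a i \<noteq> 0} \<subseteq> {..<n}"
    using assms not_less by blast
  then show ?thesis
    unfolding deg_def by (intro sum.mono_neutral_left) auto
qed

lemma deg_add:
  assumes "\<And>i. n \<le> i \<Longrightarrow> a i = 0" "\<And>i. n \<le> i \<Longrightarrow> b i = 0"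
  shows "deg (\<lambda>i. a i + b i) = deg a + deg b"
  using assms by (simp add: deg_eq_sum_lessThan[where n = n] sum.distrib)

lemma tmul_simps [simp]:
  "snd (tmul \<theta> w) = snd w"
  "fst (fst (tmul \<theta> w)) = (\<lambda>i. fst \<theta> i + fst (fst w) i)"
  "snd (fst (tmul \<theta> w)) = (\<lambda>i. snd \<theta> i + snd (fst w) i)"
  by (simp_all add: tmul_def)

lemma tmul_eq_iff: "tmul \<theta> v = tmul \<theta> w \<longleftrightarrow> v = w"
  by (auto simp: tmul_def prod_eq_iff fun_eq_iff)

lemma in_mono_tmul_iff: "in_mono n (fst (tmul \<theta> w)) \<longleftrightarrow> in_mono n \<theta> \<and> in_mono n (fst w)"
  by (auto simp: in_mono_def)

lemma ord_x_tmul: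
  "in_mono n \<theta> \<Longrightarrow> in_mono n (fst w) \<Longrightarrow> ord_x (tmul \<theta> w) = deg (fst \<theta>) + ord_x w"
  unfolding ord_x_def in_mono_def by (simp add: deg_add[where n = n])

lemma ord_d_tmul:
  "in_mono n \<theta> \<Longrightarrow> in_mono n (fst w) \<Longrightarrow> ord_d (tmul \<theta> w) = deg (snd \<theta>) + ord_d w"
  unfolding ord_d_def in_mono_def by (simp add: deg_add[where n = n])

lemma trm_less_x_imp_ord_x_le: "trm_less_x v w \<Longrightarrow> ord_x v \<le> ord_x w"
  unfolding trm_less_x_def mono_less_x_def ord_x_def by auto

lemma ord_x_less_imp_trm_less_x: "ord_x v < ord_x w \<Longrightarrow> trm_less_x v w"
  unfolding trm_less_x_def mono_less_x_def ord_x_def by simp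

lemma trm_less_x_tmul:
  assumes "in_mono n \<theta>" "in_mono n (fst v)" "in_mono n (fst w)" "trm_less_x v w"
  shows "trm_less_x (tmul \<theta> v) (tmul \<theta> w)"
proof -
  have deg_shift: "deg (\<lambda>i. a i + b i) = deg a + deg b"
    if "a \<in> {fst \<theta>, snd \<theta>}" "b \<in> {fst (fst v), snd (fst v), fst (fst w), snd (fst w)}" for a b
    using that assms(1-3) by (auto simp: in_mono_def intro!: deg_add[where n = n])
  have "lexless (\<lambda>i. c i + a i) (\<lambda>i. c i + b i)" if "lexless a b" for a b c :: "nat \<Rightarrow> nat"
    using that unfolding lexless_def by auto
  moreover have "(\<lambda>i. c i + a i) = (\<lambda>i. c i + b i) \<longleftrightarrow> a = b" for a b c :: "nat \<Rightarrow> nat"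
    by (auto simp: fun_eq_iff)
  ultimately show ?thesis
    using \<open>trm_less_x v w\<close>
    unfolding trm_less_x_def mono_less_x_def tmul_def
    by (auto simp: deg_shift prod_eq_iff)
qed

section \<open>The module action\<close>

lemma mono_act_nonzeroE:
  assumes "mono_act \<theta> w v \<noteq> 0"
  obtains k where "snd v = snd w"
    and "\<And>j. k j \<le> snd \<theta> j"
    and "\<And>j. fst (fst v) j + k j = fst \<theta> j + fst (fst w) j"
    and "\<And>j. snd (fst v) j + k j = snd \<theta> j + snd (fst w) j"
proof -
  have "snd v = snd w"
    using assms unfolding mono_act_def by (cases "snd v = snd w") simp_all
  moreover have "{k. \<forall>j. k j \<le> snd \<theta> j \<and> k j \<le> fst (fst w) j \<and>
      fst (fst v) j + k j = fst \<theta> j + fst (fst w) j \<and> snd (fst v) j + k j = snd \<theta> j + snd (fst w) j} \<noteq> {}"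
    (is "?K \<noteq> {}")
  proof
    assume "?K = {}"
    then have "mono_act \<theta> w v = 0"
      unfolding mono_act_def by (simp only: sum.empty if_cancel)
    with assms show False ..
  qed
  ultimately show ?thesis
    using that by blast
qed

lemma mono_act_tmul_self: "mono_act \<theta> w (tmul \<theta> w) = 1"
proof -
  have "{k. \<forall>j. k j \<le> snd \<theta> j \<and> k j \<le> fst (fst w) j \<and>
          fst \<theta> j + fst (fst w) j + k j = fst \<theta> j + fst (fst w) j \<and>
          snd \<theta> j + snd (fst w) j + k j = snd \<theta> j + snd (fst w) j} = {\<lambda>_. 0}"
    by (auto simp: fun_eq_iff)
  then show ?thesis
    by (simp add: mono_act_def)
qed

lemma mono_act_support:
  assumes act: "mono_act \<theta> w v \<noteq> 0" and "in_mono n \<theta>" "in_mono n (fst w)"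
  shows "snd v = snd w" and "in_mono n (fst v)"
    and "v = tmul \<theta> w \<or> ord_x v < ord_x (tmul \<theta> w)"
    and "ord_d v \<le> ord_d (tmul \<theta> w)"
proof -
  obtain k where snd_v: "snd v = snd w" and k_le: "\<And>j. k j \<le> snd \<theta> j"
    and x_eq: "\<And>j. fst (fst v) j + k j = fst \<theta> j + fst (fst w) j"
    and d_eq: "\<And>j. snd (fst v) j + k j = snd \<theta> j + snd (fst w) j"
    by (rule mono_act_nonzeroE[OF act]) blast
  have k_vanish: "k j = 0" if "n \<le> j" for j
    using k_le[of j] \<open>in_mono n \<theta>\<close> that by (simp add: in_mono_def)
  show "snd v = snd w" by (fact snd_v)
  show v_mono: "in_mono n (fst v)"
    using x_eq d_eq \<open>in_mono n \<theta>\<close> \<open>in_mono n (fst w)\<close> unfolding in_mono_def by (metis add_is_0)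
  have tmul_mono: "in_mono n (fst (tmul \<theta> w))"
    using assms(2,3) by (simp add: in_mono_tmul_iff)
  have "ord_x v + sum k {..<n} = ord_x (tmul \<theta> w)"
    and "ord_d v + sum k {..<n} = ord_d (tmul \<theta> w)"
    using v_mono tmul_mono x_eq d_eq
    by (auto simp: ord_x_def ord_d_def in_mono_def deg_eq_sum_lessThan[where n = n]
        sum.distrib[symmetric])
  moreover have "v = tmul \<theta> w" if "sum k {..<n} = 0"
  proof -
    have "k = (\<lambda>_. 0)"
    proof
      fix j
      show "k j = 0"
        using that k_vanish[of j] by (cases "j < n") auto
    qed
    then show ?thesis
      using x_eq d_eq snd_v by (auto simp: tmul_def prod_eq_iff fun_eq_iff)
  qed
  ultimately show "v = tmul \<theta> w \<or> ord_x v < ord_x (tmul \<theta> w)"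
    and "ord_d v \<le> ord_d (tmul \<theta> w)"
    by fastforce+
qed

lemma supp_empty_iff: "supp f = {} \<longleftrightarrow> f = (\<lambda>_. 0)"
  unfolding supp_def by auto

definition weyl_monom :: "mono \<Rightarrow> 'k::zero \<Rightarrow> 'k weyl" where
  "weyl_monom \<theta> c = (\<lambda>\<theta>'. if \<theta>' = \<theta> then c else 0)"

lemma in_weyl_weyl_monom: "in_mono n \<theta> \<Longrightarrow> in_weyl n (weyl_monom \<theta> c)"
  by (auto simp: in_weyl_def weyl_monom_def supp_def)

lemma act_weyl_monom: "act (weyl_monom \<theta> c) g v = (\<Sum>w\<in>supp g. c * g w * mono_act \<theta> w v)"
  unfolding act_def weyl_monom_def
  by (cases "c = 0") (auto simp: supp_def)

lemma act_add:
  fixes P Q :: "'k::field_char_0 weyl"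
  assumes "finite (supp P)" "finite (supp Q)"
  shows "act (\<lambda>\<theta>. P \<theta> + Q \<theta>) g v = act P g v + act Q g v"
proof -
  let ?T = "supp P \<union> supp Q"
  have act_eq: "act R g v = (\<Sum>\<theta>\<in>?T. \<Sum>w\<in>supp g. R \<theta> * g w * mono_act \<theta> w v)"
    if "supp R \<subseteq> ?T" for R :: "'k weyl"
    unfolding act_def using that assms
    by (intro sum.mono_neutral_left) (auto simp: supp_def)
  have "supp (\<lambda>\<theta>. P \<theta> + Q \<theta>) \<subseteq> ?T"
    by (auto simp: supp_def)
  then show ?thesis
    by (simp add: act_eq distrib_right sum.distrib)
qed

lemma in_weyl_add:
  fixes P Q :: "'k::monoid_add weyl"
  assumes "in_weyl n P" "in_weyl n Q"
  shows "in_weyl n (\<lambda>\<theta>. P \<theta> + Q \<theta>)"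
proof -
  have "supp (\<lambda>\<theta>. P \<theta> + Q \<theta>) \<subseteq> supp P \<union> supp Q"
    by (auto simp: supp_def)
  with assms show ?thesis
    unfolding in_weyl_def by (meson UnE finite_Un finite_subset subsetD)
qed

lemma act_weyl_monom_support:
  fixes g :: "'k::field_char_0 fmod"
  assumes g: "in_E n m g" "supp g \<noteq> {}" and "in_mono n \<theta>"
    and act: "act (weyl_monom \<theta> c) g v \<noteq> 0"
  shows "v = tmul \<theta> (ux g) \<or> trm_less_x v (tmul \<theta> (ux g))"
    and "ord_d v \<le> ord_d (tmul \<theta> (vd g))"
    and "in_mono n (fst v)" and "snd v < m"
proof -
  have fin: "finite (supp g)"
    using g by (simp add: in_E_def)
  obtain w where w: "w \<in> supp g" and "c * g w * mono_act \<theta> w v \<noteq> 0"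
    using act unfolding act_weyl_monom by (meson sum.neutral)
  then have w_act: "mono_act \<theta> w v \<noteq> (0::'k)"
    by auto
  have g_mono: "in_mono n (fst t)" "snd t < m" if "t \<in> supp g" for t
    using g that by (auto simp: in_E_def)
  note support = mono_act_support[OF w_act \<open>in_mono n \<theta>\<close> g_mono(1)[OF w]]
  have w_ux: "w = ux g \<or> trm_less_x w (ux g)"
    using ux_greatest[OF fin g(2)] w by blast
  have ux_mono: "in_mono n (fst (ux g))"
    using g_mono ux_greatest(1)[OF fin g(2)] by blast
  show "v = tmul \<theta> (ux g) \<or> trm_less_x v (tmul \<theta> (ux g))"
    using support(3)
  proof
    assume "v = tmul \<theta> w"
    then show ?thesis
      using w_ux trm_less_x_tmul[OF \<open>in_mono n \<theta>\<close> g_mono(1)[OF w] ux_mono] by blast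
  next
    assume "ord_x v < ord_x (tmul \<theta> w)"
    also have "\<dots> \<le> ord_x (tmul \<theta> (ux g))"
      using w_ux trm_less_x_imp_ord_x_le[of w "ux g"]
      by (auto simp: ord_x_tmul[OF \<open>in_mono n \<theta>\<close>] g_mono(1)[OF w] ux_mono)
    finally show ?thesis
      by (simp add: ord_x_less_imp_trm_less_x)
  qed
  have "ord_d v \<le> ord_d (tmul \<theta> w)"
    by (fact support(4))
  also have "\<dots> \<le> ord_d (tmul \<theta> (vd g))"
    using ord_d_le_ord_d_vd[OF fin w] g_mono(1)[OF vd_greatest(1)[OF fin g(2)]]
    by (simp add: ord_d_tmul[OF \<open>in_mono n \<theta>\<close>] g_mono(1)[OF w])
  finally show "ord_d v \<le> ord_d (tmul \<theta> (vd g))" .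
  show "in_mono n (fst v)"
    by (fact support(2))
  show "snd v < m"
    using support(1) g_mono(2)[OF w] by simp
qed

lemma act_weyl_monom_ux:
  fixes g :: "'k::field_char_0 fmod"
  assumes g: "in_E n m g" "supp g \<noteq> {}" and "in_mono n \<theta>"
  shows "act (weyl_monom \<theta> c) g (tmul \<theta> (ux g)) = c * g (ux g)"
proof -
  have fin: "finite (supp g)"
    using g by (simp add: in_E_def)
  have ux: "ux g \<in> supp g"
    by (rule ux_greatest(1)[OF fin g(2)])
  have g_mono: "in_mono n (fst t)" if "t \<in> supp g" for t
    using g that by (simp add: in_E_def)
  have others: "mono_act \<theta> w (tmul \<theta> (ux g)) = (0::'k)" if w: "w \<in> supp g" "w \<noteq> ux g" for w
  proof (rule ccontr)
    assume "mono_act \<theta> w (tmul \<theta> (ux g)) \<noteq> 0"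
    from mono_act_support(3)[OF this \<open>in_mono n \<theta>\<close> g_mono[OF w(1)]] w(2)
    have "ord_x (tmul \<theta> (ux g)) < ord_x (tmul \<theta> w)"
      by (auto simp: tmul_eq_iff)
    moreover have "ord_x w \<le> ord_x (ux g)"
      using ux_greatest(2)[OF fin g(2) w] by (rule trm_less_x_imp_ord_x_le)
    ultimately show False
      using g_mono[OF w(1)] g_mono[OF ux] by (simp add: ord_x_tmul[OF \<open>in_mono n \<theta>\<close>])
  qed
  then have "act (weyl_monom \<theta> c) g (tmul \<theta> (ux g)) = c * g (ux g) * mono_act \<theta> (ux g) (tmul \<theta> (ux g))"
    unfolding act_weyl_monom sum.remove[OF fin ux] using others by (simp add: sum.neutral)
  then show ?thesis
    by (simp add: mono_act_tmul_self)
qed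

section \<open>Reduction\<close>

definition term_box :: "nat \<Rightarrow> nat \<Rightarrow> nat \<Rightarrow> nat \<Rightarrow> trm set" where
  "term_box n m X D = {t. in_mono n (fst t) \<and> snd t < m \<and> ord_x t \<le> X \<and> ord_d t \<le> D}"

lemma finite_term_box: "finite (term_box n m X D)"
proof -
  define F where "F B = {a :: nat \<Rightarrow> nat. \<forall>i. (i \<in> {..<n} \<longrightarrow> a i \<in> {..B}) \<and> (i \<notin> {..<n} \<longrightarrow> a i = 0)}"
    for B
  have "finite (F B)" for B
    unfolding F_def by (rule finite_set_of_finite_funs) auto
  moreover have "a \<in> F B" if "\<And>i. n \<le> i \<Longrightarrow> a i = 0" "deg a \<le> B" for a B
  proof -
    have "a i \<le> B" if "i < n" for i
      using member_le_sum[of i "{..<n}" a] that \<open>deg a \<le> B\<close>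
      by (simp add: deg_eq_sum_lessThan[OF \<open>\<And>i. n \<le> i \<Longrightarrow> a i = 0\<close>])
    with that(1) show ?thesis
      unfolding F_def by (auto simp: not_less)
  qed
  then have "term_box n m X D \<subseteq> (F X \<times> F D) \<times> {..<m}"
    unfolding term_box_def in_mono_def ord_x_def ord_d_def by (auto simp: mem_Times_iff)
  ultimately show ?thesis
    by (auto intro: finite_subset)
qed

lemma in_E_imp_supp_subset_term_box:
  assumes "in_E n m f"
  obtains X D where "supp f \<subseteq> term_box n m X D"
proof
  have "finite (supp f)"
    using assms by (simp add: in_E_def)
  then show "supp f \<subseteq> term_box n m (\<Sum>t\<in>supp f. ord_x t) (\<Sum>t\<in>supp f. ord_d t)"
    using assms unfolding term_box_def in_E_def by (auto intro: member_le_sum)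
qed

lemma in_E_if_supp_subset_term_box: "supp h \<subseteq> term_box n m X D \<Longrightarrow> in_E n m h"
  using finite_term_box unfolding in_E_def term_box_def by (auto intro: finite_subset)

lemma supp_and_ord_d_vd_if_changes_bounded:
  fixes h h' :: "'k::zero fmod"
  assumes h: "supp h \<subseteq> B" "finite B"
    and changed: "\<And>v. h' v \<noteq> h v \<Longrightarrow> h' v \<noteq> 0 \<Longrightarrow> v \<in> B \<and> ord_d v \<le> ord_d (vd h)"
  shows "supp h' \<subseteq> B" and "supp h' \<noteq> {} \<Longrightarrow> ord_d (vd h') \<le> ord_d (vd h)"
proof -
  show supp_h': "supp h' \<subseteq> B"
  proof
    fix v
    assume "v \<in> supp h'"
    then show "v \<in> B"
      using h(1) changed[of v] unfolding supp_def by (cases "h' v = h v") auto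
  qed
  assume "supp h' \<noteq> {}"
  moreover have "finite (supp h')"
    using supp_h' h(2) by (rule finite_subset)
  ultimately have "vd h' \<in> supp h'"
    by (rule vd_greatest(1)[rotated])
  then show "ord_d (vd h') \<le> ord_d (vd h)"
  proof (cases "h' (vd h') = h (vd h')")
    case True
    have "finite (supp h)"
      using h by (rule finite_subset)
    moreover from True \<open>vd h' \<in> supp h'\<close> have "vd h' \<in> supp h"
      by (simp add: supp_def)
    ultimately show ?thesis
      by (rule ord_d_le_ord_d_vd)
  next
    case False
    with \<open>vd h' \<in> supp h'\<close> show ?thesis
      using changed by (simp add: supp_def)
  qed
qed

lemma subtract_monomial_multiple:
  fixes g h :: "'k::field_char_0 fmod"
  assumes g: "in_E n m g" "supp g \<noteq> {}" and h: "supp h \<subseteq> term_box n m X D"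
    and w: "w = tmul \<theta> (ux g)" "h w \<noteq> 0"
    and ord_le: "ord_d (tmul \<theta> (vd g)) \<le> ord_d (vd h)"
  defines "h' \<equiv> \<lambda>v. h v - act (weyl_monom \<theta> (h w / g (ux g))) g v"
  shows "h' w = 0" and "supp h' \<subseteq> term_box n m X D"
    and "\<And>v. v \<noteq> w \<Longrightarrow> h' v \<noteq> h v \<Longrightarrow> trm_less_x v w"
    and "supp h' \<noteq> {} \<Longrightarrow> ord_d (vd h') \<le> ord_d (vd h)"
    and "in_mono n \<theta>"
proof -
  have "w \<in> term_box n m X D"
    using h \<open>h w \<noteq> 0\<close> by (auto simp: supp_def)
  then show \<theta>: "in_mono n \<theta>"
    using w by (simp add: term_box_def in_mono_tmul_iff)
  have "w \<in> supp h"
    using \<open>h w \<noteq> 0\<close> by (simp add: supp_def)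
  then have "vd h \<in> term_box n m X D"
    using h vd_greatest(1) finite_subset[OF h finite_term_box] by blast
  then have ord_d_vd_h: "ord_d (vd h) \<le> D"
    by (simp add: term_box_def)
  have "g (ux g) \<noteq> 0"
    using ux_greatest(1)[OF _ g(2)] g(1) by (auto simp: in_E_def supp_def)
  then show "h' w = 0"
    using act_weyl_monom_ux[OF g \<theta>] by (simp add: h'_def w)
  have new_term: "trm_less_x v w \<and> ord_d v \<le> ord_d (vd h) \<and> v \<in> term_box n m X D"
    if "h' v \<noteq> h v" "v \<noteq> w" for v
  proof -
    have "act (weyl_monom \<theta> (h w / g (ux g))) g v \<noteq> 0"
      using that(1) by (simp add: h'_def)
    note support = act_weyl_monom_support[OF g \<theta> this]
    have "trm_less_x v w" "ord_d v \<le> ord_d (vd h)" "in_mono n (fst v)" "snd v < m"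
      using support that(2) ord_le w by auto
    moreover have "ord_x v \<le> X"
      using trm_less_x_imp_ord_x_le[OF \<open>trm_less_x v w\<close>] \<open>w \<in> term_box n m X D\<close>
      by (simp add: term_box_def)
    ultimately show ?thesis
      using ord_d_vd_h by (simp add: term_box_def)
  qed
  then show "trm_less_x v w" if "v \<noteq> w" "h' v \<noteq> h v" for v
    using that by blast
  have "v \<in> term_box n m X D \<and> ord_d v \<le> ord_d (vd h)" if "h' v \<noteq> h v" "h' v \<noteq> 0" for v
    using new_term[OF that(1)] that(2) \<open>h' w = 0\<close> by blast
  then show "supp h' \<subseteq> term_box n m X D" and "supp h' \<noteq> {} \<Longrightarrow> ord_d (vd h') \<le> ord_d (vd h)"
    using supp_and_ord_d_vd_if_changes_bounded[OF h finite_term_box] by blast+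
qed

lemma act_zero: "act (\<lambda>_. 0) g v = 0"
  by (simp add: act_def supp_def)

lemma sum_act_update_add:
  fixes Q :: "nat \<Rightarrow> 'k::field_char_0 weyl"
  assumes "i < r" "in_weyl n (Q i)" "in_weyl n P"
  shows "(\<Sum>j<r. act ((Q(i := (\<lambda>\<theta>. Q i \<theta> + P \<theta>))) j) (g j) v)
    = (\<Sum>j<r. act (Q j) (g j) v) + act P (g i) v"
proof -
  have "act ((Q(i := (\<lambda>\<theta>. Q i \<theta> + P \<theta>))) j) (g j) v
      = act (Q j) (g j) v + (if j = i then act P (g i) v else 0)" for j
    using assms(2,3) by (simp add: act_add in_weyl_def)
  then show ?thesis
    using \<open>i < r\<close> by (simp add: sum.distrib)
qed

locale reduction_basis =
  fixes n m r :: nat and g :: "nat \<Rightarrow> 'k::field_char_0 fmod"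
  assumes g_in_E: "\<And>i. i < r \<Longrightarrow> in_E n m (g i)"
    and g_nonzero: "\<And>i. i < r \<Longrightarrow> supp (g i) \<noteq> {}"
begin

definition reducible :: "'k fmod \<Rightarrow> trm \<Rightarrow> bool" where
  "reducible h t \<longleftrightarrow> h t \<noteq> 0 \<and>
     (\<exists>i<r. \<exists>\<theta>. t = tmul \<theta> (ux (g i)) \<and> ord_d (tmul \<theta> (vd (g i))) \<le> ord_d (vd h))"

lemma reduced_wrt_if_irreducible: "(\<And>t. \<not> reducible h t) \<Longrightarrow> i < r \<Longrightarrow> reduced_wrt (g i) h"
  unfolding reduced_wrt_def reducible_def by blast

lemma reduction_step:
  assumes h: "supp h \<subseteq> term_box n m X D" and "reducible h w"
    and w_max: "\<And>t. reducible h t \<Longrightarrow> t \<noteq> w \<Longrightarrow> trm_less_x t w"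
  obtains i P where "i < r" "in_weyl n P"
    and "supp (\<lambda>v. h v - act P (g i) v) \<subseteq> term_box n m X D"
    and "\<And>t. reducible (\<lambda>v. h v - act P (g i) v) t \<Longrightarrow> trm_less_x t w"
proof -
  from \<open>reducible h w\<close> obtain i \<theta> where "i < r" "h w \<noteq> 0" and w: "w = tmul \<theta> (ux (g i))"
    and ord_le: "ord_d (tmul \<theta> (vd (g i))) \<le> ord_d (vd h)"
    unfolding reducible_def by blast
  have gi: "in_E n m (g i)" "supp (g i) \<noteq> {}"
    using g_in_E g_nonzero \<open>i < r\<close> by auto
  define P where "P = weyl_monom \<theta> (h w / g i (ux (g i)))"
  define h' where "h' = (\<lambda>v. h v - act P (g i) v)"
  have h'_apply: "\<And>v. h v - act P (g i) v = h' v"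
    by (simp add: h'_def)
  note cancel = subtract_monomial_multiple[OF gi h w \<open>h w \<noteq> 0\<close> ord_le, folded P_def h'_def,
      unfolded h'_apply]
  have "trm_less_x t w" if "reducible h' t" for t
  proof (cases "h' t = h t")
    case True
    have "h' t \<noteq> 0"
      using that by (simp add: reducible_def)
    then have "t \<noteq> w"
      using cancel(1) by blast
    from \<open>h' t \<noteq> 0\<close> have "supp h' \<noteq> {}"
      unfolding supp_def by blast
    with that True have "reducible h t"
      using cancel(4) by (fastforce simp: reducible_def)
    then show ?thesis
      using w_max \<open>t \<noteq> w\<close> by blast
  next
    case False
    moreover have "t \<noteq> w"
      using that cancel(1) unfolding reducible_def by blast
    ultimately show ?thesis
      using cancel(3) by blast
  qed
  then show thesis
    using that[OF \<open>i < r\<close> in_weyl_weyl_monom[OF cancel(5)]] cancel(2) unfolding h'_def P_def by blast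
qed

definition reducible_downset :: "trm set \<Rightarrow> 'k fmod \<Rightarrow> trm set" where
  "reducible_downset B h = {s \<in> B. \<exists>t. reducible h t \<and> (s = t \<or> trm_less_x s t)}"

lemma card_reducible_downset_less:
  assumes "finite B" "w \<in> B" "reducible h w" "\<And>t. reducible h' t \<Longrightarrow> trm_less_x t w"
  shows "card (reducible_downset B h') < card (reducible_downset B h)"
proof (rule psubset_card_mono)
  show "finite (reducible_downset B h)"
    using \<open>finite B\<close> by (simp add: reducible_downset_def)
  have "reducible_downset B h' \<subseteq> {s \<in> B. trm_less_x s w}"
  proof
    fix s
    assume "s \<in> reducible_downset B h'"
    then obtain t where "s \<in> B" "reducible h' t" "s = t \<or> trm_less_x s t"
      unfolding reducible_downset_def by blast
    then show "s \<in> {s \<in> B. trm_less_x s w}"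
      using assms(4) transpD[OF transp_trm_less_x, of s t w] by blast
  qed
  moreover have "{s \<in> B. trm_less_x s w} \<subseteq> reducible_downset B h"
    using \<open>reducible h w\<close> unfolding reducible_downset_def by blast
  moreover have "w \<in> reducible_downset B h" "w \<notin> {s \<in> B. trm_less_x s w}"
    using assms(2,3) irreflpD[OF irreflp_trm_less_x] unfolding reducible_downset_def by blast+
  ultimately show "reducible_downset B h' \<subset> reducible_downset B h"
    by blast
qed

lemma reduce_to_irreducible:
  assumes "supp h \<subseteq> term_box n m X D"
  shows "\<exists>h' Q. supp h' \<subseteq> term_box n m X D \<and> (\<forall>i<r. in_weyl n (Q i)) \<and>
           (\<lambda>v. h v - h' v) = (\<lambda>v. \<Sum>i<r. act (Q i) (g i) v) \<and> (\<forall>t. \<not> reducible h' t)"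
  using assms
proof (induction "card (reducible_downset (term_box n m X D) h)" arbitrary: h rule: less_induct)
  case less
  show ?case
  proof (cases "\<exists>t. reducible h t")
    case False
    with less.prems show ?thesis
      by (intro exI[of _ h] exI[of _ "\<lambda>_ _. 0"]) (simp add: act_zero in_weyl_def supp_def)
  next
    case True
    have "{t. reducible h t} \<subseteq> supp h"
      by (auto simp: reducible_def supp_def)
    then have "finite {t. reducible h t}"
      using less.prems finite_term_box by (meson finite_subset)
    then obtain w where "reducible h w" and w_max: "\<And>t. reducible h t \<Longrightarrow> t \<noteq> w \<Longrightarrow> trm_less_x t w"
      using finite_has_greatest_wrt[OF transp_trm_less_x totalp_trm_less_x, of "{t. reducible h t}"] True
      by blast
    obtain i P where "i < r" "in_weyl n P"
      and supp_h': "supp (\<lambda>v. h v - act P (g i) v) \<subseteq> term_box n m X D"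
      and below_w: "\<And>t. reducible (\<lambda>v. h v - act P (g i) v) t \<Longrightarrow> trm_less_x t w"
      using reduction_step[OF less.prems \<open>reducible h w\<close> w_max] by blast
    have "w \<in> term_box n m X D"
      using less.prems \<open>reducible h w\<close> by (auto simp: reducible_def supp_def)
    then obtain h' Q where "supp h' \<subseteq> term_box n m X D" and Q: "\<forall>i<r. in_weyl n (Q i)"
      and repr: "(\<lambda>v. h v - act P (g i) v - h' v) = (\<lambda>v. \<Sum>i<r. act (Q i) (g i) v)"
      and "\<forall>t. \<not> reducible h' t"
      using less.hyps[OF card_reducible_downset_less[OF finite_term_box _ \<open>reducible h w\<close> below_w]
          supp_h'] by blast
    let ?Q = "Q(i := (\<lambda>\<theta>. Q i \<theta> + P \<theta>))"
    have "\<forall>j<r. in_weyl n (?Q j)"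
      using Q \<open>in_weyl n P\<close> by (simp add: in_weyl_add)
    moreover have "(\<lambda>v. h v - h' v) = (\<lambda>v. \<Sum>j<r. act (?Q j) (g j) v)"
    proof
      fix v
      have "h v - h' v = (\<Sum>j<r. act (Q j) (g j) v) + act P (g i) v"
        using fun_cong[OF repr, of v] by (simp add: algebra_simps)
      also have "\<dots> = (\<Sum>j<r. act (?Q j) (g j) v)"
        using Q \<open>i < r\<close> \<open>in_weyl n P\<close> by (subst sum_act_update_add) auto
      finally show "h v - h' v = (\<Sum>j<r. act (?Q j) (g j) v)" .
    qed
    ultimately show ?thesis
      using \<open>supp h' \<subseteq> term_box n m X D\<close> \<open>\<forall>t. \<not> reducible h' t\<close> by blast
  qed
qed

end

theorem theorem4p6:
  fixes n m r :: nat
    and f :: "'k::field_char_0 fmod"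
    and g :: "nat \<Rightarrow> 'k fmod"
  assumes "in_E n m f"
    and "\<forall>i<r. in_E n m (g i)"
    and "is_GB r g (submod n r g)"
  shows "\<exists>h Q. in_E n m h \<and> (\<forall>i<r. in_weyl n (Q i)) \<and>
           (\<lambda>v. f v - h v) = (\<lambda>v. \<Sum>i<r. act (Q i) (g i) v) \<and>
           (\<forall>i<r. reduced_wrt (g i) h)"
proof -
  interpret reduction_basis n m r g
  proof
    show "\<And>i. i < r \<Longrightarrow> in_E n m (g i)"
      using assms(2) by blast
    show "\<And>i. i < r \<Longrightarrow> supp (g i) \<noteq> {}"
      using assms(3) by (auto simp: is_GB_def supp_empty_iff)
  qed
  obtain X D where "supp f \<subseteq> term_box n m X D"
    using assms(1) by (rule in_E_imp_supp_subset_term_box)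
  then obtain h Q where "supp h \<subseteq> term_box n m X D" "\<forall>i<r. in_weyl n (Q i)"
    "(\<lambda>v. f v - h v) = (\<lambda>v. \<Sum>i<r. act (Q i) (g i) v)" "\<forall>t. \<not> reducible h t"
    using reduce_to_irreducible by blast
  then show ?thesis
    using in_E_if_supp_subset_term_box reduced_wrt_if_irreducible by blast
qed

end
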